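(* For all $X,Y\in\mathbb{S}^n_{++}$ and all $s,t\in[0,1]$: (i) $X*_tY=Y*_{1-t}X$; (ii) $X*_s(X*_tY)=X*_{st}Y$; (iii) $(X*_sY)*_tY=X*_{s+t-st}Y$.
   Context: $\mathbb{S}^n_{++}$ denotes the set of real symmetric positive definite $n\times n$ matrices. For $X,Y\in\mathbb{S}^n_{++}$ the matrix $YX^{-1}$ has real positive eigenvalues; let $\alpha=\lambda_{\min}(YX^{-1})$ and $\beta=\lambda_{\max}(YX^{-1})$. For $0<\alpha\le\beta$ and $t\in\mathbb{R}$ set $\varphi_{\alpha\beta}(t)=\frac{\beta^t-\alpha^t}{\beta-\alpha}$ and $\psi_{\alpha\beta}(t)=\frac{\beta\alpha^t-\alpha\beta^t}{\beta-\alpha}$ if $\beta>\alpha$, and $\varphi_{\alpha\beta}(t)=t\alpha^{t-1}$, $\psi_{\alpha\beta}(t)=(1-t)\alpha^t$ if $\beta=\alpha$. The Thompson geodesic from $X$ to $Y$ is $X*_tY=\varphi_{\alpha\beta}(t)\,Y+\psi_{\alpha\beta}(t)\,X$. *)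

theory Defs
  imports "HOL-Analysis.Analysis"
begin

definition spd :: "real^'n^'n \<Rightarrow> bool" where
  "spd A \<longleftrightarrow> transpose A = A \<and> (\<forall>x. x \<noteq> 0 \<longrightarrow> x \<bullet> (A *v x) > 0)"

definition real_eigenvalues :: "real^'n^'n \<Rightarrow> real set" where
  "real_eigenvalues A = {l. \<exists>v. v \<noteq> 0 \<and> A *v v = l *\<^sub>R v}"

definition lam_min :: "real^'n^'n \<Rightarrow> real^'n^'n \<Rightarrow> real" where
  "lam_min X Y = Min (real_eigenvalues (Y ** matrix_inv X))"

definition lam_max :: "real^'n^'n \<Rightarrow> real^'n^'n \<Rightarrow> real" where
  "lam_max X Y = Max (real_eigenvalues (Y ** matrix_inv X))"

definition phi_ab :: "real \<Rightarrow> real \<Rightarrow> real \<Rightarrow> real" where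
  "phi_ab a b t = (if b > a then (b powr t - a powr t) / (b - a) else t * a powr (t - 1))"

definition psi_ab :: "real \<Rightarrow> real \<Rightarrow> real \<Rightarrow> real" where
  "psi_ab a b t = (if b > a then (b * a powr t - a * b powr t) / (b - a) else (1 - t) * a powr t)"

definition thompson_geod :: "real^'n^'n \<Rightarrow> real \<Rightarrow> real^'n^'n \<Rightarrow> real^'n^'n" where
  "thompson_geod X t Y =
     phi_ab (lam_min X Y) (lam_max X Y) t *\<^sub>R Y + psi_ab (lam_min X Y) (lam_max X Y) t *\<^sub>R X"

end

theory Submission
  imports Defs
begin

text \<open>For a < b the coefficients phi and psi are those of the unique affine function
  x \<mapsto> phi x + psi that agrees with x powr t at x = a and x = b. On a generalized
  eigenvector (Y w = l X w) the geodesic acts as (phi l + psi) X, and the extreme generalized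
  eigenvalues transform predictably: affinely under Y \<mapsto> a Y + b X with a \<ge> 0, and by
  inversion under exchanging X and Y. Thus (i) and (ii) reduce to scalar identities, each an
  instance of the uniqueness of the affine interpolant, and (iii) follows from (i) and (ii),
  since X *_s Y stays positive definite.\<close>

lemma transpose_add: "transpose (A + B) = transpose A + transpose (B :: 'a::semiring_1^'n^'m)"
  by (simp add: transpose_def vec_eq_iff)

lemma transpose_diff: "transpose (A - B) = transpose A - transpose (B :: 'a::ring_1^'n^'m)"
  by (simp add: transpose_def vec_eq_iff)

lemma symmetric_matrix_inner_commute:
  fixes A :: "real^'n^'n"
  assumes "transpose A = A"
  shows "u \<bullet> (A *v w) = w \<bullet> (A *v u)"
  by (metis assms dot_lmul_matrix inner_commute vector_transpose_matrix)

lemma psd_quadratic_form_zero_imp_kernel: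
  fixes A :: "real^'n^'n"
  assumes sym: "transpose A = A" and psd: "\<And>u. 0 \<le> u \<bullet> (A *v u)"
    and zero: "w \<bullet> (A *v w) = 0"
  shows "A *v w = 0"
  \<comment> \<open>Otherwise the form is negative at w + r A w for a suitable small r < 0.\<close>
proof (rule ccontr)
  define z where "z = A *v w"
  define c where "c = z \<bullet> (A *v z)"
  define r where "r = - (z \<bullet> z) / (c + 1)"
  assume "A *v w \<noteq> 0"
  then have z_pos: "0 < z \<bullet> z"
    by (simp add: z_def)
  have c_nonneg: "0 \<le> c"
    by (simp add: c_def psd)
  have "(w + r *\<^sub>R z) \<bullet> (A *v (w + r *\<^sub>R z)) = r * (2 * (z \<bullet> z) + r * c)"
    using zero symmetric_matrix_inner_commute[OF sym, of z w]
    by (simp add: c_def z_def algebra_simps)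
  also have "\<dots> < 0"
  proof (rule mult_neg_pos)
    show "r < 0"
      using z_pos c_nonneg by (simp add: r_def)
    have "r * c = - (z \<bullet> z) * (c / (c + 1))"
      by (simp add: r_def)
    also have "\<dots> \<ge> - (z \<bullet> z)"
      using mult_left_mono[of "c / (c + 1)" 1 "z \<bullet> z"] c_nonneg by simp
    finally show "0 < 2 * (z \<bullet> z) + r * c"
      using z_pos by linarith
  qed
  finally show False
    using psd[of "w + r *\<^sub>R z"] by linarith
qed

lemma spd_quadratic_pos: "spd X \<Longrightarrow> w \<noteq> 0 \<Longrightarrow> 0 < w \<bullet> (X *v w)"
  unfolding spd_def by auto

lemma spd_inner_commute: "spd X \<Longrightarrow> u \<bullet> (X *v w) = w \<bullet> (X *v u)"
  unfolding spd_def by (blast intro: symmetric_matrix_inner_commute)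

lemma spd_invertible: "spd X \<Longrightarrow> invertible X"
  unfolding invertible_left_inverse matrix_left_invertible_ker
  by (metis inner_zero_right less_irrefl spd_quadratic_pos)

lemma matrix_inv_inverse:
  "invertible A \<Longrightarrow> A ** matrix_inv A = mat 1 \<and> matrix_inv A ** A = mat 1"
  unfolding matrix_inv_def invertible_def by (rule someI_ex)

lemma spd_scaleR_add:
  fixes X Y :: "real^'n^'n"
  assumes "spd X" "spd Y" "0 \<le> a" "0 \<le> b" "0 < a + b"
  shows "spd (a *\<^sub>R Y + b *\<^sub>R X)"
  unfolding spd_def
proof (intro conjI allI impI)
  show "transpose (a *\<^sub>R Y + b *\<^sub>R X) = a *\<^sub>R Y + b *\<^sub>R X"
    using assms(1,2) by (simp add: spd_def transpose_add transpose_scalar)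
  fix x :: "real^'n"
  assume "x \<noteq> 0"
  then have "0 < x \<bullet> (Y *v x)" "0 < x \<bullet> (X *v x)"
    using assms(1,2) by (simp_all add: spd_quadratic_pos)
  then have "0 < a * (x \<bullet> (Y *v x)) + b * (x \<bullet> (X *v x))"
    using assms(3-5) by (smt (verit) mult_pos_pos mult_nonneg_nonneg)
  then show "0 < x \<bullet> ((a *\<^sub>R Y + b *\<^sub>R X) *v x)"
    by (simp add: algebra_simps flip: scaleR_matrix_vector_assoc)
qed

definition gen_eigenvalues :: "real^'n^'n \<Rightarrow> real^'n^'n \<Rightarrow> real set" where
  "gen_eigenvalues X Y = {l. \<exists>w. w \<noteq> 0 \<and> Y *v w = l *\<^sub>R (X *v w)}"

lemma real_eigenvalues_mult_matrix_inv:
  assumes "invertible X"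
  shows "real_eigenvalues (Y ** matrix_inv X) = gen_eigenvalues X Y"
proof -
  note inv = matrix_inv_inverse[OF assms]
  show ?thesis
  proof (intro set_eqI iffI)
    fix l
    assume "l \<in> real_eigenvalues (Y ** matrix_inv X)"
    then obtain v where v: "v \<noteq> 0" "(Y ** matrix_inv X) *v v = l *\<^sub>R v"
      unfolding real_eigenvalues_def by auto
    define w where "w = matrix_inv X *v v"
    have Xw: "X *v w = v"
      by (simp add: w_def matrix_vector_mul_assoc inv)
    then have "w \<noteq> 0"
      using v(1) by auto
    moreover have "Y *v w = l *\<^sub>R (X *v w)"
      using v(2) Xw by (simp add: w_def matrix_vector_mul_assoc)
    ultimately show "l \<in> gen_eigenvalues X Y"
      unfolding gen_eigenvalues_def by blast
  next
    fix l
    assume "l \<in> gen_eigenvalues X Y"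
    then obtain w where w: "w \<noteq> 0" "Y *v w = l *\<^sub>R (X *v w)"
      unfolding gen_eigenvalues_def by auto
    define v where "v = X *v w"
    have inv_v: "matrix_inv X *v v = w"
      by (simp add: v_def matrix_vector_mul_assoc inv)
    then have "(Y ** matrix_inv X) *v v = l *\<^sub>R v"
      using w(2) by (simp add: v_def flip: matrix_vector_mul_assoc)
    moreover have "v \<noteq> 0"
      using inv_v w(1) by auto
    ultimately show "l \<in> real_eigenvalues (Y ** matrix_inv X)"
      unfolding real_eigenvalues_def by auto
  qed
qed

lemma gen_eigenvalues_pos:
  assumes "spd X" "spd Y" "l \<in> gen_eigenvalues X Y"
  shows "0 < l"
proof -
  obtain w where "w \<noteq> 0" "Y *v w = l *\<^sub>R (X *v w)"
    using assms(3) unfolding gen_eigenvalues_def by auto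
  then have "0 < l * (w \<bullet> (X *v w))" "0 < w \<bullet> (X *v w)"
    using assms(1,2) spd_quadratic_pos[of Y w] spd_quadratic_pos[of X w] by simp_all
  then show ?thesis
    by (simp add: zero_less_mult_iff)
qed

lemma gen_eigenvectors_orthogonal:
  assumes "spd X" "spd Y" "Y *v u = l *\<^sub>R (X *v u)" "Y *v w = m *\<^sub>R (X *v w)" "l \<noteq> m"
  shows "u \<bullet> (X *v w) = 0"
proof -
  have "m * (u \<bullet> (X *v w)) = u \<bullet> (Y *v w)"
    using assms(4) by simp
  also have "\<dots> = w \<bullet> (Y *v u)"
    using assms(2) by (rule spd_inner_commute)
  also have "\<dots> = l * (u \<bullet> (X *v w))"
    using assms(3) spd_inner_commute[OF assms(1), of w u] by simp
  finally show ?thesis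
    using assms(5) by simp
qed

lemma spd_orthogonal_independent:
  assumes "spd X" "0 \<notin> S" "pairwise (\<lambda>u w. u \<bullet> (X *v w) = 0) S"
  shows "independent S"
proof
  assume "dependent S"
  then obtain T c v where T: "finite T" "T \<subseteq> S" "(\<Sum>u\<in>T. c u *\<^sub>R u) = 0"
    and v: "v \<in> T" "c v \<noteq> 0"
    unfolding real_vector.dependent_explicit by blast
  have "0 = (\<Sum>u\<in>T. c u *\<^sub>R u) \<bullet> (X *v v)"
    using T(3) by simp
  also have "\<dots> = (\<Sum>u\<in>T. c u * (u \<bullet> (X *v v)))"
    by (simp add: inner_sum_left)
  also have "\<dots> = c v * (v \<bullet> (X *v v))"
    using T(2) v(1) assms(3)
    by (subst sum.remove[OF T(1) v(1)]) (auto intro!: sum.neutral simp: pairwise_def subset_iff)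
  finally show False
    using v T(2) assms(1,2) spd_quadratic_pos[of X v] by auto
qed

lemma finite_gen_eigenvalues:
  assumes "spd X" "spd Y"
  shows "finite (gen_eigenvalues X Y)"
proof -
  define W where "W l = (SOME w. w \<noteq> 0 \<and> Y *v w = l *\<^sub>R (X *v w))" for l
  have W: "W l \<noteq> 0" "Y *v W l = l *\<^sub>R (X *v W l)" if "l \<in> gen_eigenvalues X Y" for l
    using someI_ex[of "\<lambda>w. w \<noteq> 0 \<and> Y *v w = l *\<^sub>R (X *v w)"] that
    unfolding gen_eigenvalues_def W_def by auto
  have orth: "W l \<bullet> (X *v W m) = 0"
    if "l \<in> gen_eigenvalues X Y" "m \<in> gen_eigenvalues X Y" "l \<noteq> m" for l m
    using gen_eigenvectors_orthogonal[OF assms W(2) W(2)] that by blast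
  have "inj_on W (gen_eigenvalues X Y)"
    using orth W(1) assms(1) spd_quadratic_pos by (metis inj_onI less_irrefl)
  moreover have "independent (W ` gen_eigenvalues X Y)"
    using W(1) orth by (intro spd_orthogonal_independent[OF assms(1)]) (auto simp: pairwise_def)
  ultimately show ?thesis
    using independent_bound finite_imageD by blast
qed

lemma gen_eigenvalues_nonempty:
  fixes X Y :: "real^'n^'n"
  assumes "spd X" "spd Y"
  shows "gen_eigenvalues X Y \<noteq> {}"
  \<comment> \<open>The maximum of the Rayleigh quotient R is one: R w0 X - Y is positive semidefinite
    and its form vanishes at a maximizer w0.\<close>
proof -
  define R where "R w = (w \<bullet> (Y *v w)) / (w \<bullet> (X *v w))" for w :: "real^'n"
  have X_nonzero: "w \<bullet> (X *v w) \<noteq> 0" if "norm w = 1" for w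
  proof -
    have "w \<noteq> 0"
      using that by auto
    then show ?thesis
      using spd_quadratic_pos[OF assms(1)] by fastforce
  qed
  have "continuous_on (sphere 0 1) R"
    unfolding R_def by (intro continuous_intros) (auto dest: X_nonzero)
  then obtain w0 where w0: "w0 \<in> sphere 0 1" and max: "\<And>u. u \<in> sphere 0 1 \<Longrightarrow> R u \<le> R w0"
    using continuous_attains_sup[of "sphere (0::real^'n) 1" R] by auto
  define A where "A = R w0 *\<^sub>R X - Y"
  have "0 \<le> u \<bullet> (A *v u)" for u
  proof (cases "u = 0")
    case False
    have "R u = R (u /\<^sub>R norm u)"
      using False by (simp add: R_def matrix_vector_mult_scaleR power2_eq_square)
    also have "\<dots> \<le> R w0"
      using False by (intro max) simp
    finally show ?thesis
      using False spd_quadratic_pos[OF assms(1) False]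
      by (simp add: A_def R_def algebra_simps divide_le_eq flip: scaleR_matrix_vector_assoc)
  qed simp
  moreover have "transpose A = A"
    using assms by (simp add: A_def spd_def transpose_diff transpose_scalar)
  moreover have "w0 \<bullet> (A *v w0) = 0"
    using X_nonzero[of w0] w0
    by (simp add: A_def R_def algebra_simps flip: scaleR_matrix_vector_assoc)
  ultimately have "Y *v w0 = R w0 *\<^sub>R (X *v w0)"
    using psd_quadratic_form_zero_imp_kernel
    by (metis A_def eq_iff_diff_eq_0 matrix_vector_mult_diff_rdistrib scaleR_matrix_vector_assoc)
  moreover have "w0 \<noteq> 0"
    using w0 by auto
  ultimately show ?thesis
    unfolding gen_eigenvalues_def by blast
qed

lemma gen_eigenvalues_affine:
  fixes X Y :: "real^'n^'n"
  assumes "spd X" "gen_eigenvalues X Y \<noteq> {}"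
  shows "gen_eigenvalues X (a *\<^sub>R Y + b *\<^sub>R X) = (\<lambda>l. a * l + b) ` gen_eigenvalues X Y"
proof (intro set_eqI iffI)
  fix m
  assume "m \<in> gen_eigenvalues X (a *\<^sub>R Y + b *\<^sub>R X)"
  then obtain w where w: "w \<noteq> 0" and eq: "a *\<^sub>R (Y *v w) = (m - b) *\<^sub>R (X *v w)"
    unfolding gen_eigenvalues_def
    by (auto simp: algebra_simps simp flip: scaleR_matrix_vector_assoc)
  have Xw: "X *v w \<noteq> 0"
    using spd_quadratic_pos[OF assms(1) w] by auto
  show "m \<in> (\<lambda>l. a * l + b) ` gen_eigenvalues X Y"
  proof (cases "a = 0")
    case True
    then have "m = b"
      using eq Xw by simp
    with True assms(2) show ?thesis
      by auto
  next
    case False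
    then have "Y *v w = ((m - b) / a) *\<^sub>R (X *v w)"
      using arg_cong[OF eq, of "scaleR (inverse a)"] by (simp add: divide_inverse_commute)
    then have "(m - b) / a \<in> gen_eigenvalues X Y"
      using w unfolding gen_eigenvalues_def by blast
    then show ?thesis
      using False by (auto intro!: image_eqI[of _ _ "(m - b) / a"])
  qed
next
  fix m
  assume "m \<in> (\<lambda>l. a * l + b) ` gen_eigenvalues X Y"
  then obtain l w where "m = a * l + b" "w \<noteq> 0" "Y *v w = l *\<^sub>R (X *v w)"
    unfolding gen_eigenvalues_def by blast
  then show "m \<in> gen_eigenvalues X (a *\<^sub>R Y + b *\<^sub>R X)"
    unfolding gen_eigenvalues_def
    by (auto simp: algebra_simps simp flip: scaleR_matrix_vector_assoc)
qed

lemma gen_eigenvalues_swap: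
  assumes "spd X" "spd Y"
  shows "gen_eigenvalues Y X = inverse ` gen_eigenvalues X Y"
proof -
  have swap: "inverse l \<in> gen_eigenvalues Y X" if "l \<in> gen_eigenvalues X Y" "0 < l"
    for X Y :: "real^'n^'n" and l
    using that unfolding gen_eigenvalues_def by auto
  show ?thesis
    using swap[of _ Y X] swap[of _ X Y] gen_eigenvalues_pos[OF assms] gen_eigenvalues_pos[OF assms(2,1)]
    by (force simp: image_iff)
qed

lemma Min_inverse_image:
  fixes S :: "real set"
  assumes "finite S" "S \<noteq> {}" "\<And>x. x \<in> S \<Longrightarrow> 0 < x"
  shows "Min (inverse ` S) = inverse (Max S)"
  using assms Max_in[OF assms(1,2)] by (intro Min_eqI) (auto intro!: le_imp_inverse_le)

lemma Max_inverse_image: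
  fixes S :: "real set"
  assumes "finite S" "S \<noteq> {}" "\<And>x. x \<in> S \<Longrightarrow> 0 < x"
  shows "Max (inverse ` S) = inverse (Min S)"
proof (rule Max_eqI)
  have "0 < Min S"
    using assms(3)[OF Min_in[OF assms(1,2)]] .
  then show "y \<le> inverse (Min S)" if "y \<in> inverse ` S" for y
    using that Min_le[OF assms(1)] by (auto intro: le_imp_inverse_le)
qed (use assms in auto)

lemma lam_min_max_gen_eigenvalues:
  assumes "spd X"
  shows "lam_min X Y = Min (gen_eigenvalues X Y)" "lam_max X Y = Max (gen_eigenvalues X Y)"
  using real_eigenvalues_mult_matrix_inv[OF spd_invertible[OF assms]]
  by (simp_all add: lam_min_def lam_max_def)

lemma lam_min_pos:
  assumes "spd X" "spd Y"
  shows "0 < lam_min X Y"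
  using assms Min_in[OF finite_gen_eigenvalues[OF assms] gen_eigenvalues_nonempty[OF assms]]
  by (simp add: lam_min_max_gen_eigenvalues gen_eigenvalues_pos)

lemma lam_min_le_lam_max:
  assumes "spd X" "spd Y"
  shows "lam_min X Y \<le> lam_max X Y"
  using assms Min_le[OF finite_gen_eigenvalues[OF assms] Max_in]
    finite_gen_eigenvalues[OF assms] gen_eigenvalues_nonempty[OF assms]
  by (simp add: lam_min_max_gen_eigenvalues)

lemma lam_scaleR_add:
  fixes X Y :: "real^'n^'n"
  assumes "spd X" "spd Y" "0 \<le> a"
  shows "lam_min X (a *\<^sub>R Y + b *\<^sub>R X) = a * lam_min X Y + b"
    and "lam_max X (a *\<^sub>R Y + b *\<^sub>R X) = a * lam_max X Y + b"
proof -
  have "mono (\<lambda>l. a * l + b)"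
    using assms(3) by (auto intro!: monoI mult_left_mono)
  then show "lam_min X (a *\<^sub>R Y + b *\<^sub>R X) = a * lam_min X Y + b"
    and "lam_max X (a *\<^sub>R Y + b *\<^sub>R X) = a * lam_max X Y + b"
    using assms(1) finite_gen_eigenvalues[OF assms(1,2)] gen_eigenvalues_nonempty[OF assms(1,2)]
    by (simp_all add: lam_min_max_gen_eigenvalues gen_eigenvalues_affine
        flip: mono_Min_commute mono_Max_commute)
qed

lemma lam_swap:
  assumes "spd X" "spd Y"
  shows "lam_min Y X = inverse (lam_max X Y)" "lam_max Y X = inverse (lam_min X Y)"
  unfolding lam_min_max_gen_eigenvalues[OF assms(1)] lam_min_max_gen_eigenvalues[OF assms(2)]
    gen_eigenvalues_swap[OF assms]
  using finite_gen_eigenvalues[OF assms] gen_eigenvalues_nonempty[OF assms]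
    gen_eigenvalues_pos[OF assms]
  by (simp_all add: Min_inverse_image Max_inverse_image)

lemma phi_psi_eqI:
  assumes "a < b" "p * a + q = a powr t" "p * b + q = b powr t"
  shows "phi_ab a b t = p" "psi_ab a b t = q"
proof -
  have "p = (b powr t - a powr t) / (b - a)" "q = (b * a powr t - a * b powr t) / (b - a)"
    using assms by (auto simp: field_simps simp flip: assms(2,3))
  then show "phi_ab a b t = p" "psi_ab a b t = q"
    using assms(1) by (simp_all add: phi_ab_def psi_ab_def)
qed

lemma phi_psi_interpolate:
  assumes "0 < a" "a \<le> b"
  shows "phi_ab a b t * a + psi_ab a b t = a powr t"
    and "phi_ab a b t * b + psi_ab a b t = b powr t"
proof -
  have "(B - A) / (b - a) * a + (b * A - a * B) / (b - a) = A"
    and "(B - A) / (b - a) * b + (b * A - a * B) / (b - a) = B" if "a < b" for A B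
    using that by (simp_all add: divide_simps) (simp_all add: algebra_simps)
  moreover have "t * a powr (t - 1) * a + (1 - t) * a powr t = a powr t"
    using assms(1) by (simp add: powr_diff field_simps)
  ultimately show "phi_ab a b t * a + psi_ab a b t = a powr t"
    and "phi_ab a b t * b + psi_ab a b t = b powr t"
    using assms by (auto simp: phi_ab_def psi_ab_def)
qed

lemma phi_psi_reverse:
  assumes "0 < a" "a \<le> b"
  shows "phi_ab (inverse b) (inverse a) (1 - t) = psi_ab a b t"
    and "psi_ab (inverse b) (inverse a) (1 - t) = phi_ab a b t"
proof -
  have "psi_ab a b t * inverse x + phi_ab a b t = inverse x powr (1 - t)" if "x = a \<or> x = b" for x
    using that phi_psi_interpolate[OF assms, of t] assms
    by (auto simp: inverse_powr powr_divide powr_diff field_simps)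
  moreover have "inverse b < inverse a" if "a < b"
    using that assms(1) by simp
  ultimately show "phi_ab (inverse b) (inverse a) (1 - t) = psi_ab a b t"
    and "psi_ab (inverse b) (inverse a) (1 - t) = phi_ab a b t"
    using assms
    by (cases "a = b"; simp add: phi_psi_eqI phi_ab_def psi_ab_def inverse_powr powr_divide powr_diff powr_minus field_simps)+
qed

lemma phi_psi_compose:
  assumes "0 < a" "a \<le> b" "0 \<le> t"
  shows "phi_ab (a powr t) (b powr t) s * phi_ab a b t = phi_ab a b (s * t)"
    and "phi_ab (a powr t) (b powr t) s * psi_ab a b t + psi_ab (a powr t) (b powr t) s
           = psi_ab a b (s * t)"
proof -
  let ?phi = "phi_ab (a powr t) (b powr t) s" and ?psi = "psi_ab (a powr t) (b powr t) s"
  have "?phi * phi_ab a b t = phi_ab a b (s * t) \<and> ?phi * psi_ab a b t + ?psi = psi_ab a b (s * t)"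
  proof (cases "a = b")
    case True
    then show ?thesis
      using assms(1) by (simp add: phi_ab_def psi_ab_def powr_diff powr_powr field_simps)
  next
    case False
    have le: "a powr t \<le> b powr t"
      using assms by (simp add: powr_mono2)
    have interp: "?phi * phi_ab a b t * x + (?phi * psi_ab a b t + ?psi) = x powr (s * t)"
      if x: "x = a \<or> x = b" for x
    proof -
      have "?phi * phi_ab a b t * x + (?phi * psi_ab a b t + ?psi)
          = ?phi * (phi_ab a b t * x + psi_ab a b t) + ?psi"
        by (simp add: algebra_simps)
      also have "\<dots> = ?phi * x powr t + ?psi"
        using x phi_psi_interpolate[OF assms(1,2), of t] by auto
      also have "\<dots> = (x powr t) powr s"
        using x phi_psi_interpolate[OF _ le, of s] assms(1) by auto
      also have "\<dots> = x powr (s * t)"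
        by (simp add: powr_powr mult.commute)
      finally show ?thesis .
    qed
    have "a < b"
      using False assms(2) by simp
    from phi_psi_eqI[OF this interp interp] show ?thesis
      by simp
  qed
  then show "?phi * phi_ab a b t = phi_ab a b (s * t)"
    and "?phi * psi_ab a b t + ?psi = psi_ab a b (s * t)"
    by auto
qed

lemma phi_nonneg: "0 < a \<Longrightarrow> a \<le> b \<Longrightarrow> 0 \<le> t \<Longrightarrow> 0 \<le> phi_ab a b t"
  by (auto simp: phi_ab_def intro!: divide_nonneg_nonneg powr_mono2)

lemma psi_nonneg:
  assumes "0 < a" "a \<le> b" "t \<le> 1"
  shows "0 \<le> psi_ab a b t"
proof (cases "a < b")
  case True
  have "b * a powr t - a * b powr t = a * b * (a powr (t - 1) - b powr (t - 1))"
    using assms by (simp add: powr_diff field_simps)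
  also have "\<dots> \<ge> 0"
    using assms powr_mono2'[of "t - 1" a b] by simp
  finally show ?thesis
    using True by (simp add: psi_ab_def)
qed (use assms in \<open>simp add: psi_ab_def\<close>)

lemma spd_thompson_geod:
  assumes "spd X" "spd Y" "t \<in> {0..1}"
  shows "spd (thompson_geod X t Y)"
proof -
  let ?a = "lam_min X Y" and ?b = "lam_max X Y"
  let ?phi = "phi_ab ?a ?b t" and ?psi = "psi_ab ?a ?b t"
  have a: "0 < ?a" "?a \<le> ?b"
    using assms by (simp_all add: lam_min_pos lam_min_le_lam_max)
  have nonneg: "0 \<le> ?phi" "0 \<le> ?psi"
    using assms a by (simp_all add: phi_nonneg psi_nonneg)
  have "0 < ?phi * ?a + ?psi"
    using phi_psi_interpolate(1)[OF a] a by simp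
  then have "0 < ?phi + ?psi"
    using nonneg by (cases "?phi = 0") auto
  with assms(1,2) nonneg show ?thesis
    unfolding thompson_geod_def by (rule spd_scaleR_add)
qed

lemma thompson_geod_swap:
  assumes "spd X" "spd Y"
  shows "thompson_geod X t Y = thompson_geod Y (1 - t) X"
  using phi_psi_reverse[OF lam_min_pos[OF assms] lam_min_le_lam_max[OF assms]]
  by (simp add: thompson_geod_def lam_swap[OF assms] add.commute)

lemma lam_thompson_geod:
  assumes "spd X" "spd Y" "0 \<le> t"
  shows "lam_min X (thompson_geod X t Y) = lam_min X Y powr t"
    and "lam_max X (thompson_geod X t Y) = lam_max X Y powr t"
proof -
  let ?a = "lam_min X Y" and ?b = "lam_max X Y"
  have a: "0 < ?a" "?a \<le> ?b"
    using assms by (simp_all add: lam_min_pos lam_min_le_lam_max)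
  then have "0 \<le> phi_ab ?a ?b t"
    using assms(3) by (rule phi_nonneg)
  from lam_scaleR_add[OF assms(1,2) this] phi_psi_interpolate[OF a]
  show "lam_min X (thompson_geod X t Y) = ?a powr t" "lam_max X (thompson_geod X t Y) = ?b powr t"
    unfolding thompson_geod_def by (simp_all add: mult.commute)
qed

lemma thompson_geod_compose:
  assumes "spd X" "spd Y" "0 \<le> t"
  shows "thompson_geod X s (thompson_geod X t Y) = thompson_geod X (s * t) Y"
proof -
  let ?a = "lam_min X Y" and ?b = "lam_max X Y"
  let ?phi = "phi_ab (?a powr t) (?b powr t) s" and ?psi = "psi_ab (?a powr t) (?b powr t) s"
  have "thompson_geod X s (thompson_geod X t Y) = ?phi *\<^sub>R thompson_geod X t Y + ?psi *\<^sub>R X"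
    by (simp add: thompson_geod_def[of X s] lam_thompson_geod[OF assms])
  also have "\<dots> = (?phi * phi_ab ?a ?b t) *\<^sub>R Y + (?phi * psi_ab ?a ?b t + ?psi) *\<^sub>R X"
    by (simp add: thompson_geod_def[of X t] scaleR_add_right scaleR_add_left)
  also have "\<dots> = thompson_geod X (s * t) Y"
    using phi_psi_compose[OF lam_min_pos[OF assms(1,2)] lam_min_le_lam_max[OF assms(1,2)] assms(3)]
    by (simp add: thompson_geod_def[of X "s * t"])
  finally show ?thesis .
qed

theorem lemma4p1:
  fixes X Y :: "real^'n^'n" and s t :: real
  assumes "spd X" and "spd Y"
    and "s \<in> {0..1}" and "t \<in> {0..1}"
  shows "thompson_geod X t Y = thompson_geod Y (1 - t) X
       \<and> thompson_geod X s (thompson_geod X t Y) = thompson_geod X (s * t) Y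
       \<and> thompson_geod (thompson_geod X s Y) t Y = thompson_geod X (s + t - s * t) Y"
proof (intro conjI)
  show "thompson_geod X t Y = thompson_geod Y (1 - t) X"
    using assms(1,2) by (rule thompson_geod_swap)
  show "thompson_geod X s (thompson_geod X t Y) = thompson_geod X (s * t) Y"
    using assms by (simp add: thompson_geod_compose)
  have "thompson_geod (thompson_geod X s Y) t Y = thompson_geod Y (1 - t) (thompson_geod X s Y)"
    using assms by (intro thompson_geod_swap spd_thompson_geod)
  also have "\<dots> = thompson_geod Y (1 - t) (thompson_geod Y (1 - s) X)"
    using assms(1,2) by (simp only: thompson_geod_swap[of X Y s])
  also have "\<dots> = thompson_geod Y ((1 - t) * (1 - s)) X"
    using assms by (simp add: thompson_geod_compose)
  also have "\<dots> = thompson_geod X (s + t - s * t) Y"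
    using thompson_geod_swap[OF assms(1,2), of "s + t - s * t"] by (simp add: algebra_simps)
  finally show "thompson_geod (thompson_geod X s Y) t Y = thompson_geod X (s + t - s * t) Y" .
qed

end
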